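(* Let $A\in M_n(R)$ be a non-singular triangular matrix, and write $f_A(x)=\sum_{k=0}^n a_kx^k$, $f_{A^\nabla}(x)=\sum_{k=0}^n b_kx^k$. Then $\det(A)f_{A^\nabla}(x)=x^nf_A(x^{-1})$, i.e. $\det(A)b_k=a_{n-k}$ for all $k=0,\dots,n$.
   Context: Supertropical semiring $R=T\cup G\cup\{-\infty\}$: $T=\mathcal G$ an ordered abelian group (tangible), $G=\{a^\nu\}$ a copy (ghost); $a+b$ is the element of larger $\nu$-value if the $\nu$-values differ and $a^\nu$ if equal; multiplication adds $\nu$-values, is ghost if a factor is ghost, $-\infty$ absorbing; $0_R=-\infty$, $1_R=0$. $\det(A)=\sum_{\sigma\in S_n}\prod_i a_{i,\sigma(i)}$; $A$ non-singular iff $\det(A)\in T$. $\operatorname{adj}(A)_{i,j}=\det(A_{j,i})$; $A^\nabla=\det(A)^{-1}\operatorname{adj}(A)$. Triangular means all entries above (or all below) the diagonal equal $0_R$. The characteristic polynomial $f_M(x)=\det(xI+M)$ has $x^k$-coefficient the sum of determinants of all $(n-k)\times(n-k)$ principal submatrices of $M$; $x^nf_A(x^{-1})$ denotes the polynomial $\sum_{k=0}^n a_{n-k}x^k$. *)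

theory Defs
  imports "HOL-Combinatorics.Permutations"
begin

text \<open>Supertropical semiring over an ordered abelian group 'a (written additively):
  tangible elements Tan a, ghost elements Gh a (= a^nu), and the zero NegInf (= -infinity).\<close>

datatype 'a st = Tan 'a | Gh 'a | NegInf

fun nuval :: "'a st \<Rightarrow> 'a" where
  "nuval (Tan a) = a" | "nuval (Gh a) = a" | "nuval NegInf = undefined"

definition is_tangible :: "'a st \<Rightarrow> bool" where
  "is_tangible x \<longleftrightarrow> (\<exists>a. x = Tan a)"

instantiation st :: (linordered_ab_group_add) comm_monoid_add
begin
definition zero_st :: "'a st" where "zero_st = NegInf"
definition plus_st :: "'a st \<Rightarrow> 'a st \<Rightarrow> 'a st" where
  "plus_st x y = (if x = NegInf then y else if y = NegInf then x
      else if nuval y < nuval x then x else if nuval x < nuval y then y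
      else Gh (nuval x))"
instance
proof
  fix a b c :: "'a st"
  show "a + b + c = a + (b + c)"
    by (cases a; cases b; cases c) (auto simp: plus_st_def)
  show "a + b = b + a"
    by (cases a; cases b) (auto simp: plus_st_def)
  show "0 + a = a" by (simp add: plus_st_def zero_st_def)
qed
end

instantiation st :: (linordered_ab_group_add) comm_monoid_mult
begin
definition one_st :: "'a st" where "one_st = Tan 0"
fun times_st :: "'a st \<Rightarrow> 'a st \<Rightarrow> 'a st" where
  "times_st NegInf y = NegInf"
| "times_st x NegInf = NegInf"
| "times_st (Tan a) (Tan b) = Tan (a + b)"
| "times_st x y = Gh (nuval x + nuval y)"
instance
proof
  fix a b c :: "'a st"
  show "a * b * c = a * (b * c)"
    by (cases a; cases b; cases c) (auto simp: ac_simps)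
  show "a * b = b * a"
    by (cases a; cases b) (auto simp: ac_simps)
  show "1 * a = a" by (cases a) (auto simp: one_st_def)
qed
end

fun st_inv :: "'a::linordered_ab_group_add st \<Rightarrow> 'a st" where
  "st_inv (Tan a) = Tan (- a)" | "st_inv x = undefined"

text \<open>n x n matrices are functions nat => nat => 'a st, only entries with indices < n matter.\<close>
type_synonym 'a stmat = "nat \<Rightarrow> nat \<Rightarrow> 'a st"

text \<open>Determinant (permanent-like sum) of the submatrix with rows/columns indexed by S.\<close>
definition det_on :: "nat set \<Rightarrow> 'a::linordered_ab_group_add stmat \<Rightarrow> 'a st" where
  "det_on S A = (\<Sum>\<sigma> \<in> {\<sigma>. \<sigma> permutes S}. \<Prod>i\<in>S. A i (\<sigma> i))"

definition st_det :: "nat \<Rightarrow> 'a::linordered_ab_group_add stmat \<Rightarrow> 'a st" where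
  "st_det n A = det_on {..<n} A"

definition nonsingular :: "nat \<Rightarrow> 'a::linordered_ab_group_add stmat \<Rightarrow> bool" where
  "nonsingular n A \<longleftrightarrow> is_tangible (st_det n A)"

text \<open>Minor A_{j,i}: delete row j and column i (reindexed to 0..n-2).\<close>
definition minor :: "'a stmat \<Rightarrow> nat \<Rightarrow> nat \<Rightarrow> 'a stmat" where
  "minor A j i = (\<lambda>r c. A (if r < j then r else r + 1) (if c < i then c else c + 1))"

definition st_adj :: "nat \<Rightarrow> 'a::linordered_ab_group_add stmat \<Rightarrow> 'a stmat" where
  "st_adj n A = (\<lambda>i j. st_det (n - 1) (minor A j i))"

definition quasi_inv :: "nat \<Rightarrow> 'a::linordered_ab_group_add stmat \<Rightarrow> 'a stmat" where
  "quasi_inv n A = (\<lambda>i j. st_inv (st_det n A) * st_adj n A i j)"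

definition triangular :: "nat \<Rightarrow> 'a::linordered_ab_group_add stmat \<Rightarrow> bool" where
  "triangular n A \<longleftrightarrow>
     (\<forall>i<n. \<forall>j<n. i < j \<longrightarrow> A i j = 0) \<or> (\<forall>i<n. \<forall>j<n. j < i \<longrightarrow> A i j = 0)"

text \<open>x^k coefficient of the characteristic polynomial f_M(x) = det(xI + M):
  the sum of determinants of all (n-k) x (n-k) principal submatrices of M.\<close>
definition char_coeff :: "nat \<Rightarrow> 'a::linordered_ab_group_add stmat \<Rightarrow> nat \<Rightarrow> 'a st" where
  "char_coeff n M k = (\<Sum>S \<in> {S. S \<subseteq> {..<n} \<and> card S = n - k}. det_on S M)"

end

theory Submission
  imports Defs
begin

text \<open>
  Every principal minor of a triangular matrix is the product of its diagonal entries, and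
  these are tangible because det A is. Deleting row j and column i \<noteq> j of a triangular
  matrix leaves a forced zero on every permutation (compare the sums of the surviving row and
  column indices), so the adjoint, and with it the quasi-inverse, is triangular in the same
  direction, with diagonal entries the inverses of those of A. Hence, for every principal index
  set S, det A times the S-minor of the quasi-inverse is the product of the diagonal entries of
  A outside S, i.e. the principal minor of A on the complement of S; complementation matches
  the (n - k)-subsets with the k-subsets.
\<close>

instance st :: (linordered_ab_group_add) comm_semiring_1
proof
  fix a b c :: "'a st"
  show "(a + b) * c = a * c + b * c"
    by (cases a; cases b; cases c) (auto simp: plus_st_def zero_st_def)
  show "0 * a = 0" "a * 0 = 0" by (cases a; simp add: zero_st_def)+
  show "(0::'a st) \<noteq> 1" by (simp add: zero_st_def one_st_def)
qed

lemma is_tangible_mult: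
  "is_tangible (x * y) \<longleftrightarrow> is_tangible x \<and> is_tangible (y :: 'a::linordered_ab_group_add st)"
  by (cases x; cases y) (auto simp: is_tangible_def)

lemma is_tangible_prod:
  fixes f :: "'b \<Rightarrow> 'a::linordered_ab_group_add st"
  assumes "finite S"
  shows "is_tangible (prod f S) \<longleftrightarrow> (\<forall>k\<in>S. is_tangible (f k))"
  using assms
  by (induction S rule: finite_induct) (simp_all add: is_tangible_mult, simp add: is_tangible_def one_st_def)

lemma st_inv_mult_cancel:
  "is_tangible x \<Longrightarrow> st_inv x * x = (1 :: 'a::linordered_ab_group_add st)"
  by (auto simp: is_tangible_def one_st_def)

lemma st_inv_mult:
  fixes x y :: "'a::linordered_ab_group_add st"
  shows "is_tangible x \<Longrightarrow> is_tangible y \<Longrightarrow> st_inv (x * y) = st_inv x * st_inv y"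
  by (auto simp: is_tangible_def)

lemma permutes_natset_not_id:
  fixes \<sigma> :: "nat \<Rightarrow> nat"
  assumes "\<sigma> permutes S" "\<sigma> \<noteq> id"
  shows "(\<exists>i\<in>S. i < \<sigma> i) \<and> (\<exists>i\<in>S. \<sigma> i < i)"
  using permutes_natset_le[OF assms(1)] permutes_natset_ge[OF assms(1)] assms(2)
  by (meson not_le)

lemma det_on_eq_0I:
  assumes "finite S" "\<And>\<sigma>. \<sigma> permutes S \<Longrightarrow> \<exists>i\<in>S. M i (\<sigma> i) = 0"
  shows "det_on S M = 0"
  unfolding det_on_def using assms by (intro sum.neutral) (auto intro: prod_zero)

lemma det_on_eq_diag_prod:
  assumes "finite S"
    and off_diag: "\<And>\<sigma>. \<sigma> permutes S \<Longrightarrow> \<sigma> \<noteq> id \<Longrightarrow> \<exists>i\<in>S. M i (\<sigma> i) = 0"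
  shows "det_on S M = (\<Prod>i\<in>S. M i i)"
proof -
  let ?P = "{\<sigma>. \<sigma> permutes S}"
  let ?term = "\<lambda>\<sigma>. \<Prod>i\<in>S. M i (\<sigma> i)"
  have "det_on S M = ?term id + sum ?term (?P - {id})"
    unfolding det_on_def
    using sum.remove[OF finite_permutations[OF assms(1)], of id ?term] by (simp add: permutes_id)
  moreover have "sum ?term (?P - {id}) = 0"
    using off_diag assms(1) by (intro sum.neutral) (auto intro: prod_zero)
  ultimately show ?thesis by simp
qed

definition triangular_on :: "nat set \<Rightarrow> 'a::linordered_ab_group_add stmat \<Rightarrow> bool" where
  "triangular_on S M \<longleftrightarrow>
     (\<forall>i\<in>S. \<forall>j\<in>S. i < j \<longrightarrow> M i j = 0) \<or> (\<forall>i\<in>S. \<forall>j\<in>S. j < i \<longrightarrow> M i j = 0)"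

lemma triangular_iff_triangular_on: "triangular n A \<longleftrightarrow> triangular_on {..<n} A"
  unfolding triangular_def triangular_on_def by blast

lemma triangular_on_subset: "triangular_on S M \<Longrightarrow> T \<subseteq> S \<Longrightarrow> triangular_on T M"
  unfolding triangular_on_def by blast

lemma triangular_on_reindex:
  assumes "strict_mono f" "triangular_on T M" "f ` S \<subseteq> T"
  shows "triangular_on S (\<lambda>a b. M (f a) (f b))"
proof -
  have "\<forall>a\<in>S. \<forall>b\<in>S. f a \<in> T \<and> f b \<in> T \<and> (f a < f b \<longleftrightarrow> a < b)"
    using assms(1,3) by (auto simp: strict_mono_less)
  with assms(2) show ?thesis unfolding triangular_on_def by metis
qed

lemma det_on_triangular_on:
  assumes "finite S" "triangular_on S M"
  shows "det_on S M = (\<Prod>i\<in>S. M i i)"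
proof (rule det_on_eq_diag_prod[OF assms(1)])
  fix \<sigma> assume \<sigma>: "\<sigma> permutes S" "\<sigma> \<noteq> id"
  have "\<sigma> i \<in> S" if "i \<in> S" for i using \<sigma>(1) that by (simp add: permutes_in_image)
  then show "\<exists>i\<in>S. M i (\<sigma> i) = 0"
    using assms(2) permutes_natset_not_id[OF \<sigma>] unfolding triangular_on_def by blast
qed

lemma st_det_triangular: "triangular n A \<Longrightarrow> st_det n A = (\<Prod>k<n. A k k)"
  unfolding st_det_def triangular_iff_triangular_on by (simp add: det_on_triangular_on)

lemma ex_less_of_sum_less:
  fixes f g :: "'b \<Rightarrow> 'c::{ordered_comm_monoid_add, linorder}"
  assumes "sum f S < sum g S"
  shows "\<exists>x\<in>S. f x < g x"
  using sum_mono[of S g f] assms by (meson leD not_le)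

definition skip :: "nat \<Rightarrow> nat \<Rightarrow> nat" where
  "skip i c = (if c < i then c else Suc c)"

lemma minor_eq_skip: "minor A j i r c = A (skip j r) (skip i c)"
  by (simp add: minor_def skip_def)

lemma strict_mono_skip: "strict_mono (skip i)"
  by (auto simp: strict_mono_def skip_def)

lemma skip_image:
  assumes "i < n"
  shows "skip i ` {..<n - 1} = {..<n} - {i}"
proof
  show "skip i ` {..<n - 1} \<subseteq> {..<n} - {i}" using assms by (auto simp: skip_def)
  show "{..<n} - {i} \<subseteq> skip i ` {..<n - 1}"
  proof
    fix k assume "k \<in> {..<n} - {i}"
    then have "k = skip i (if k < i then k else k - 1)" "(if k < i then k else k - 1) < n - 1"
      using assms by (auto simp: skip_def)
    then show "k \<in> skip i ` {..<n - 1}" by blast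
  qed
qed

lemma sum_skip:
  assumes "i < n"
  shows "(\<Sum>c<n - 1. skip i c) + i = (\<Sum>k<n. k)"
proof -
  have "(\<Sum>c<n - 1. skip i c) = (\<Sum>k\<in>{..<n} - {i}. k)"
    using sum.reindex[OF strict_mono_imp_inj_on[OF strict_mono_skip[of i]], of id "{..<n - 1}"]
      skip_image[OF assms]
    by simp
  then show ?thesis using assms by (simp add: sum.remove add.commute)
qed

lemma sum_skip_permutes:
  assumes "\<sigma> permutes {..<n - 1}" "i < n" "j < n"
  shows "(\<Sum>r<n - 1. skip j r) + j = (\<Sum>r<n - 1. skip i (\<sigma> r)) + i"
  using sum_skip[OF assms(2)] sum_skip[OF assms(3)] sum.permute[OF assms(1), of "skip i"]
  by (simp add: comp_def)

text \<open>The rows kept in minor A j i sum to (\<Sum>k<n. k) - j and the columns to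
  (\<Sum>k<n. k) - i; when i < j every permutation therefore picks some entry strictly above
  the diagonal of A.\<close>

lemma det_minor_upper_eq_0:
  assumes upper: "\<forall>a<n. \<forall>b<n. a < b \<longrightarrow> A a b = 0" and "i < j" "j < n"
  shows "st_det (n - 1) (minor A j i) = 0"
  unfolding st_det_def
proof (rule det_on_eq_0I)
  fix \<sigma> assume \<sigma>: "\<sigma> permutes {..<n - 1}"
  have "(\<Sum>r<n - 1. skip j r) < (\<Sum>r<n - 1. skip i (\<sigma> r))"
    using sum_skip_permutes[OF \<sigma>, of i j] assms(2,3) by linarith
  then obtain r where r: "r \<in> {..<n - 1}" "skip j r < skip i (\<sigma> r)"
    by (blast dest: ex_less_of_sum_less)
  have "\<sigma> r < n - 1" using permutes_in_image[OF \<sigma>] r(1) by auto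
  then have "skip j r < n" "skip i (\<sigma> r) < n" using r(1) by (auto simp: skip_def)
  then show "\<exists>r\<in>{..<n - 1}. minor A j i r (\<sigma> r) = 0"
    using upper r by (intro bexI[of _ r]) (auto simp: minor_eq_skip)
qed simp

lemma det_minor_lower_eq_0:
  assumes lower: "\<forall>a<n. \<forall>b<n. b < a \<longrightarrow> A a b = 0" and "j < i" "i < n"
  shows "st_det (n - 1) (minor A j i) = 0"
  unfolding st_det_def
proof (rule det_on_eq_0I)
  fix \<sigma> assume \<sigma>: "\<sigma> permutes {..<n - 1}"
  have "(\<Sum>r<n - 1. skip i (\<sigma> r)) < (\<Sum>r<n - 1. skip j r)"
    using sum_skip_permutes[OF \<sigma>, of i j] assms(2,3) by linarith
  then obtain r where r: "r \<in> {..<n - 1}" "skip i (\<sigma> r) < skip j r"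
    by (blast dest: ex_less_of_sum_less)
  have "\<sigma> r < n - 1" using permutes_in_image[OF \<sigma>] r(1) by auto
  then have "skip j r < n" "skip i (\<sigma> r) < n" using r(1) by (auto simp: skip_def)
  then show "\<exists>r\<in>{..<n - 1}. minor A j i r (\<sigma> r) = 0"
    using lower r by (intro bexI[of _ r]) (auto simp: minor_eq_skip)
qed simp

lemma triangular_quasi_inv:
  assumes "triangular n A"
  shows "triangular n (quasi_inv n A)"
proof -
  have Q: "quasi_inv n A a b = st_inv (st_det n A) * st_det (n - 1) (minor A b a)" for a b
    by (simp add: quasi_inv_def st_adj_def)
  from assms consider
      (upper) "\<forall>a<n. \<forall>b<n. a < b \<longrightarrow> A a b = 0"
    | (lower) "\<forall>a<n. \<forall>b<n. b < a \<longrightarrow> A a b = 0"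
    unfolding triangular_def by blast
  then show ?thesis
  proof cases
    case upper
    have "quasi_inv n A a b = 0" if "a < b" "b < n" for a b
      unfolding Q using det_minor_upper_eq_0[OF upper that] by simp
    then show ?thesis unfolding triangular_def by blast
  next
    case lower
    have "quasi_inv n A a b = 0" if "b < a" "a < n" for a b
      unfolding Q using det_minor_lower_eq_0[OF lower that] by simp
    then show ?thesis unfolding triangular_def by blast
  qed
qed

lemma det_minor_diag:
  assumes "triangular n A" "i < n"
  shows "st_det (n - 1) (minor A i i) = (\<Prod>k\<in>{..<n} - {i}. A k k)"
proof -
  have "skip i ` {..<n - 1} \<subseteq> {..<n}" using skip_image[OF assms(2)] by blast
  then have "triangular_on {..<n - 1} (minor A i i)"
    using triangular_on_reindex[OF strict_mono_skip] assms(1)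
    unfolding triangular_iff_triangular_on minor_eq_skip by blast
  then have "st_det (n - 1) (minor A i i) = (\<Prod>k<n - 1. A (skip i k) (skip i k))"
    unfolding st_det_def by (simp add: det_on_triangular_on minor_eq_skip)
  also have "\<dots> = (\<Prod>k\<in>skip i ` {..<n - 1}. A k k)"
    using prod.reindex[OF strict_mono_imp_inj_on[OF strict_mono_skip[of i]], of "\<lambda>k. A k k"]
    by simp
  finally show ?thesis using skip_image[OF assms(2)] by simp
qed

lemma triangular_diag_tangible:
  assumes "nonsingular n A" "triangular n A" "k < n"
  shows "is_tangible (A k k)"
  using assms is_tangible_prod[of "{..<n}" "\<lambda>k. A k k"]
  by (simp add: nonsingular_def st_det_triangular)

lemma quasi_inv_diag:
  assumes "nonsingular n A" "triangular n A" "i < n"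
  shows "quasi_inv n A i i = st_inv (A i i)"
proof -
  define P where "P = (\<Prod>k\<in>{..<n} - {i}. A k k)"
  have tangible: "is_tangible (A i i)" "is_tangible P"
    using triangular_diag_tangible[OF assms(1,2)] assms(3)
    by (auto simp: P_def is_tangible_prod)
  have "st_det n A = A i i * P"
    using assms(2,3) by (simp add: st_det_triangular P_def prod.remove)
  then have "quasi_inv n A i i = st_inv (A i i) * (st_inv P * P)"
    using det_minor_diag[OF assms(2,3)] tangible
    by (simp add: quasi_inv_def st_adj_def P_def st_inv_mult mult.assoc)
  then show ?thesis by (simp add: st_inv_mult_cancel tangible)
qed

lemma det_mult_det_on_quasi_inv:
  assumes "nonsingular n A" "triangular n A" "S \<subseteq> {..<n}"
  shows "st_det n A * det_on S (quasi_inv n A) = det_on ({..<n} - S) A"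
proof -
  have fin: "finite S" using assms(3) finite_subset by blast
  have tri: "triangular_on T A" "triangular_on T (quasi_inv n A)" if "T \<subseteq> {..<n}" for T
    using assms(2) triangular_quasi_inv[OF assms(2)] that triangular_on_subset
    unfolding triangular_iff_triangular_on by blast+
  have "A k k * st_inv (A k k) = 1" if "k \<in> S" for k
    using that assms(3) triangular_diag_tangible[OF assms(1,2), of k] st_inv_mult_cancel
    by (auto simp: mult.commute)
  then have cancel: "(\<Prod>k\<in>S. A k k) * (\<Prod>k\<in>S. st_inv (A k k)) = 1"
    by (simp add: prod.distrib[symmetric])
  have "st_det n A * det_on S (quasi_inv n A)
      = (\<Prod>k\<in>{..<n} - S. A k k) * (\<Prod>k\<in>S. A k k) * (\<Prod>k\<in>S. st_inv (A k k))"
    using assms fin tri[OF assms(3)]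
    by (simp add: st_det_triangular det_on_triangular_on quasi_inv_diag subset_eq
        prod.subset_diff[of S "{..<n}"])
  also have "\<dots> = det_on ({..<n} - S) A"
    using cancel tri[of "{..<n} - S"] by (simp add: mult.assoc det_on_triangular_on)
  finally show ?thesis .
qed

lemma char_coeff_complement:
  assumes complement: "\<And>S. S \<subseteq> {..<n} \<Longrightarrow> d * det_on S Q = det_on ({..<n} - S) M"
    and "k \<le> n"
  shows "d * char_coeff n Q k = char_coeff n M (n - k)"
proof -
  have card_compl: "card ({..<n} - S) = n - card S" if "S \<subseteq> {..<n}" for S
    using that by (simp add: card_Diff_subset finite_subset)
  have "d * char_coeff n Q k = (\<Sum>S | S \<subseteq> {..<n} \<and> card S = n - k. det_on ({..<n} - S) M)"
    unfolding char_coeff_def sum_distrib_left using complement by (intro sum.cong) auto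
  also have "\<dots> = char_coeff n M (n - k)"
    unfolding char_coeff_def
    by (rule sum.reindex_bij_witness[of _ "\<lambda>T. {..<n} - T" "\<lambda>S. {..<n} - S"])
      (use assms(2) card_compl in auto)
  finally show ?thesis .
qed

theorem mainTheorem10:
  fixes A :: "'a::linordered_ab_group_add stmat" and n :: nat
  assumes "nonsingular n A" and "triangular n A"
  shows "\<forall>k\<le>n. st_det n A * char_coeff n (quasi_inv n A) k = char_coeff n A (n - k)"
proof (intro allI impI)
  fix k assume "k \<le> n"
  with det_mult_det_on_quasi_inv[OF assms]
  show "st_det n A * char_coeff n (quasi_inv n A) k = char_coeff n A (n - k)"
    by (rule char_coeff_complement)
qed

end
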